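(* Let $1<p<\infty$ and $0<s_1<s_2<1$. Then for all $u\in L^p(\mathbb R^n)$, $$J^1_{s_1,p}(u)\le 2^{(1-s_1)p}J^1_{s_2,p}(u)+\frac{(1-s_1)2^{p+1}}{p}\|u\|_p^p.$$
   Context: Let $e_1=(1,0,\dots,0)$ and for $s\in(0,1)$, $J^1_{s,p}(u)=s(1-s)\int_{\mathbb R^n}\int_{\mathbb R}\frac{|u(x+he_1)-u(x)|^p}{|h|^{1+sp}}dh\,dx\in[0,\infty]$. Here $s_1,s_2$ are real numbers (not coordinates of a vector). *)

theory Defs
  imports "HOL-Analysis.Analysis"
begin

text \<open>Space R^n is modelled as real^'n, the index type carrying a well-order so that the
  first coordinate (and hence e_1) makes sense.\<close>

definition e1 :: "real ^ 'n::{finite,wellorder}" where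
  "e1 = axis (LEAST i::'n. True) 1"

definition J1 :: "real \<Rightarrow> real \<Rightarrow> (real ^ 'n::{finite,wellorder} \<Rightarrow> real) \<Rightarrow> ennreal" where
  "J1 s p u = ennreal (s * (1 - s)) *
     (\<integral>\<^sup>+ x. (\<integral>\<^sup>+ h. ennreal (\<bar>u (x + h *\<^sub>R e1) - u x\<bar> powr p / \<bar>h\<bar> powr (1 + s * p)) \<partial>lborel) \<partial>lborel)"

definition in_Lp :: "real \<Rightarrow> (real ^ 'n::{finite,wellorder} \<Rightarrow> real) \<Rightarrow> bool" where
  "in_Lp p u \<longleftrightarrow> u \<in> borel_measurable lborel \<and> integrable lborel (\<lambda>x. \<bar>u x\<bar> powr p)"

end

theory Submission
  imports Defs
begin

text \<open>
  Put omega(h) = int |u(x + h e_1) - u(x)|^p dx and G(h) = omega(h) + omega(-h); by Tonelli,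
  J^1_{s,p}(u) = s(1-s) int_0^oo G(h) h^(-1-sp) dh. Convexity of t^p and translation invariance
  of Lebesgue measure give G(2h) <= 2^p G(h) and G <= 2^(p+1) ||u||_p^p, and the latter bound
  alone controls the part h > 1. On (0,1] we cut into the dyadic shells (2^(-m-1), 2^(-m)] and
  rescale each of them to (1/2,1]. The integral becomes
  int_{1/2}^1 (sum_m q^m Phi_m(y)) y^(-1-sp) dy with q = 2^(-(1-s)p) and
  Phi_m(y) = 2^(mp) G(2^(-m) y), which is increasing in m by the doubling inequality. Abel
  summation shows that (1-q) sum_m q^m Phi_m increases with q, and the elementary estimate
  s_1(1-s_1)(1-q_2) <= 2^((1-s_1)p) s_2(1-s_2)(1-q_1) for q_i = 2^(-(1-s_i)p) concludes.
\<close>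

section \<open>Geometric series of increasing sequences\<close>

lemma suminf_swap_ennreal:
  fixes f :: "nat \<Rightarrow> nat \<Rightarrow> ennreal"
  shows "(\<Sum>m. \<Sum>k. f m k) = (\<Sum>k. \<Sum>m. f m k)"
proof -
  have "(\<Sum>m. \<Sum>k. f m k) = (\<integral>\<^sup>+m. (\<Sum>k. f m k) \<partial>count_space UNIV)"
    by (simp add: nn_integral_count_space_nat)
  also have "\<dots> = (\<Sum>k. \<integral>\<^sup>+m. f m k \<partial>count_space UNIV)"
    by (rule nn_integral_suminf) auto
  finally show ?thesis
    by (simp add: nn_integral_count_space_nat)
qed

lemma sums_geometric_tail:
  fixes q :: real
  assumes "\<bar>q\<bar> < 1"
  shows "(\<lambda>m. if k \<le> m then q ^ m else 0) sums (q ^ k / (1 - q))"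
proof -
  let ?f = "\<lambda>m. if k \<le> m then q ^ m else 0"
  have "(\<lambda>i. q ^ k * q ^ i) sums (q ^ k * (1 / (1 - q)))"
    using assms by (intro sums_mult geometric_sums) auto
  then have "(\<lambda>i. ?f (i + k)) sums (q ^ k / (1 - q))"
    by (simp add: power_add mult.commute)
  then show ?thesis
    by (subst (asm) sums_iff_shift) simp
qed

lemma incseq_ennreal_partial_sums:
  fixes \<Phi> :: "nat \<Rightarrow> ennreal"
  assumes "incseq \<Phi>"
  obtains d where "\<And>m. \<Phi> m = (\<Sum>k\<le>m. d k)"
proof -
  have "\<forall>k. \<exists>c. \<Phi> (Suc k) = \<Phi> k + c"
    using assms by (auto simp: incseq_Suc_iff le_iff_add)
  then obtain c where c: "\<And>k. \<Phi> (Suc k) = \<Phi> k + c k"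
    by metis
  have "\<Phi> m = (\<Sum>k\<le>m. case_nat (\<Phi> 0) c k)" for m
    by (induction m) (auto simp: c)
  then show ?thesis
    using that by blast
qed

lemma geometric_abel_summation_ennreal:
  fixes d :: "nat \<Rightarrow> ennreal" and q :: real
  assumes "0 \<le> q" "q < 1"
  shows "ennreal (1 - q) * (\<Sum>m. ennreal (q ^ m) * (\<Sum>k\<le>m. d k)) = (\<Sum>k. ennreal (q ^ k) * d k)"
proof -
  have tail: "(\<Sum>m. ennreal (if k \<le> m then q ^ m else 0)) = ennreal (q ^ k / (1 - q))" for k
    using assms by (intro suminf_ennreal_eq sums_geometric_tail) auto
  have "(\<Sum>m. ennreal (q ^ m) * (\<Sum>k\<le>m. d k))
      = (\<Sum>m. \<Sum>k. ennreal (if k \<le> m then q ^ m else 0) * d k)"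
  proof (rule suminf_cong)
    fix m
    show "ennreal (q ^ m) * (\<Sum>k\<le>m. d k) = (\<Sum>k. ennreal (if k \<le> m then q ^ m else 0) * d k)"
      by (subst suminf_finite[of "{..m}"]) (auto simp: sum_distrib_left)
  qed
  also have "\<dots> = (\<Sum>k. \<Sum>m. ennreal (if k \<le> m then q ^ m else 0) * d k)"
    by (rule suminf_swap_ennreal)
  also have "\<dots> = (\<Sum>k. ennreal (q ^ k / (1 - q)) * d k)"
    by (simp only: ennreal_suminf_multc tail)
  finally have "ennreal (1 - q) * (\<Sum>m. ennreal (q ^ m) * (\<Sum>k\<le>m. d k))
      = (\<Sum>k. ennreal (1 - q) * ennreal (q ^ k / (1 - q)) * d k)"
    by (simp add: mult.assoc)
  also have "\<dots> = (\<Sum>k. ennreal (q ^ k) * d k)"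
    using assms by (simp add: ennreal_mult[symmetric])
  finally show ?thesis .
qed

lemma geometric_weighted_suminf_mono:
  fixes \<Phi> :: "nat \<Rightarrow> ennreal" and q\<^sub>1 q\<^sub>2 :: real
  assumes "incseq \<Phi>" "0 \<le> q\<^sub>1" "q\<^sub>1 \<le> q\<^sub>2" "q\<^sub>2 < 1"
  shows "ennreal (1 - q\<^sub>1) * (\<Sum>m. ennreal (q\<^sub>1 ^ m) * \<Phi> m)
       \<le> ennreal (1 - q\<^sub>2) * (\<Sum>m. ennreal (q\<^sub>2 ^ m) * \<Phi> m)"
proof -
  obtain d where d: "\<And>m. \<Phi> m = (\<Sum>k\<le>m. d k)"
    using incseq_ennreal_partial_sums[OF assms(1)] by blast
  have "(\<Sum>k. ennreal (q\<^sub>1 ^ k) * d k) \<le> (\<Sum>k. ennreal (q\<^sub>2 ^ k) * d k)"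
    using assms by (intro suminf_le mult_right_mono ennreal_leI power_mono) auto
  with assms show ?thesis
    unfolding d by (simp add: geometric_abel_summation_ennreal)
qed

section \<open>Dyadic decomposition of the unit interval\<close>

lemma disjoint_family_dyadic_intervals:
  "disjoint_family (\<lambda>m. {(1/2::real) ^ Suc m<..(1/2) ^ m})"
proof -
  have "{(1/2::real) ^ Suc m<..(1/2) ^ m} \<inter> {(1/2) ^ Suc n<..(1/2) ^ n} = {}" if "m < n" for m n
  proof -
    have "(1/2::real) ^ n \<le> (1/2) ^ Suc m"
      using that by (intro power_decreasing) auto
    then show ?thesis by auto
  qed
  then show ?thesis
    unfolding disjoint_family_on_def by (metis Int_commute linorder_neqE_nat)
qed

lemma Union_dyadic_intervals: "(\<Union>m. {(1/2::real) ^ Suc m<..(1/2) ^ m}) = {0<..1}"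
proof (intro antisym subsetI)
  fix h :: real
  assume "h \<in> {0<..1}"
  then have "0 < h" "h \<le> 1" by auto
  obtain n where "(1/2::real) ^ n < h"
    using real_arch_pow_inv[OF \<open>0 < h\<close>, of "1/2"] by auto
  then obtain m where "\<not> (1/2::real) ^ m < h" "(1/2) ^ Suc m < h"
    using ex_least_nat_less[of "\<lambda>i. (1/2::real) ^ i < h"] \<open>h \<le> 1\<close> by auto
  then show "h \<in> (\<Union>m. {(1/2) ^ Suc m<..(1/2) ^ m})"
    by auto
next
  fix h :: real
  assume "h \<in> (\<Union>m. {(1/2) ^ Suc m<..(1/2) ^ m})"
  moreover have "(1/2::real) ^ m \<le> 1" for m
    by (simp add: power_le_one)
  ultimately show "h \<in> {0<..1}"
    by (auto intro: order.strict_trans2[OF zero_less_power] order.trans)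
qed

lemma nn_integral_unit_interval_dyadic:
  fixes f :: "real \<Rightarrow> ennreal"
  assumes [measurable]: "f \<in> borel_measurable borel"
  shows "(\<integral>\<^sup>+h. f h * indicator {0<..1} h \<partial>lborel)
    = (\<integral>\<^sup>+y. (\<Sum>m. ennreal ((1/2) ^ m) * f ((1/2) ^ m * y)) * indicator {1/2<..1} y \<partial>lborel)"
proof -
  let ?I = "\<lambda>m. {(1/2::real) ^ Suc m<..(1/2) ^ m}"
  have rescale: "(\<integral>\<^sup>+h. f h * indicator (?I m) h \<partial>lborel)
      = (\<integral>\<^sup>+y. ennreal ((1/2) ^ m) * f ((1/2) ^ m * y) * indicator {1/2<..1} y \<partial>lborel)" for m
  proof -
    have "indicator (?I m) ((1/2) ^ m * y) = (indicator {1/2<..1} y :: ennreal)" for y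
      by (simp add: indicator_def field_simps)
    then show ?thesis
      by (subst nn_integral_real_affine[where c = "(1/2) ^ m" and t = 0])
        (simp_all add: nn_integral_cmult[symmetric] mult.assoc)
  qed
  have "(\<integral>\<^sup>+h. f h * indicator {0<..1} h \<partial>lborel) = (\<integral>\<^sup>+h. (\<Sum>m. f h * indicator (?I m) h) \<partial>lborel)"
    by (simp only: ennreal_suminf_cmult suminf_indicator[OF disjoint_family_dyadic_intervals]
        Union_dyadic_intervals)
  also have "\<dots> = (\<Sum>m. \<integral>\<^sup>+h. f h * indicator (?I m) h \<partial>lborel)"
    by (rule nn_integral_suminf) measurable
  also have "\<dots> = (\<Sum>m. \<integral>\<^sup>+y. ennreal ((1/2) ^ m) * f ((1/2) ^ m * y) * indicator {1/2<..1} y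
      \<partial>lborel)"
    by (simp only: rescale)
  also have "\<dots> = (\<integral>\<^sup>+y. (\<Sum>m. ennreal ((1/2) ^ m) * f ((1/2) ^ m * y)) * indicator {1/2<..1} y
      \<partial>lborel)"
    by (simp add: nn_integral_suminf[symmetric])
  finally show ?thesis .
qed

lemma dyadic_weight_scaling:
  fixes \<sigma> y :: real and m :: nat
  shows "(1/2) ^ m * (1 / \<bar>(1/2) ^ m * y\<bar> powr (1 + \<sigma>)) = (2 powr \<sigma>) ^ m * (1 / \<bar>y\<bar> powr (1 + \<sigma>))"
proof -
  define c :: real where "c = (1/2) ^ m"
  have "0 < c" by (simp add: c_def)
  have "c powr \<sigma> * (2 powr \<sigma>) ^ m = (c * 2 ^ m) powr \<sigma>"
    by (simp add: powr_mult powr_power powr_powr powr_realpow[symmetric] mult.commute)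
  also have "c * 2 ^ m = 1"
    by (simp add: c_def power_one_over)
  finally have "(2 powr \<sigma>) ^ m = 1 / c powr \<sigma>"
    using \<open>0 < c\<close> by (simp add: field_simps)
  moreover have "\<bar>c * y\<bar> powr (1 + \<sigma>) = c * c powr \<sigma> * \<bar>y\<bar> powr (1 + \<sigma>)"
    using \<open>0 < c\<close> by (simp add: abs_mult powr_mult powr_mult_base)
  ultimately show ?thesis
    using \<open>0 < c\<close> by (simp flip: c_def)
qed

lemma nn_integral_near_origin_dyadic:
  fixes G :: "real \<Rightarrow> ennreal" and \<sigma> :: real
  assumes [measurable]: "G \<in> borel_measurable borel"
  shows "(\<integral>\<^sup>+h. G h * ennreal (1 / \<bar>h\<bar> powr (1 + \<sigma>)) * indicator {0<..1} h \<partial>lborel)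
    = (\<integral>\<^sup>+y. (\<Sum>m. ennreal ((2 powr \<sigma>) ^ m) * G ((1/2) ^ m * y)) * ennreal (1 / \<bar>y\<bar> powr (1 + \<sigma>))
        * indicator {1/2<..1} y \<partial>lborel)"
proof -
  have weight: "ennreal ((1/2) ^ m) * ennreal (1 / \<bar>(1/2) ^ m * y\<bar> powr (1 + \<sigma>))
      = ennreal ((2 powr \<sigma>) ^ m) * ennreal (1 / \<bar>y\<bar> powr (1 + \<sigma>))" for m y
    using arg_cong[where f = ennreal, OF dyadic_weight_scaling[of m y \<sigma>]]
    by (simp only: ennreal_mult'[OF zero_le_power] ennreal_mult'[OF zero_le_power[OF powr_ge_zero]])
  have scaled: "ennreal ((1/2) ^ m)
      * (G ((1/2) ^ m * y) * ennreal (1 / \<bar>(1/2) ^ m * y\<bar> powr (1 + \<sigma>)))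
      = ennreal ((2 powr \<sigma>) ^ m) * G ((1/2) ^ m * y) * ennreal (1 / \<bar>y\<bar> powr (1 + \<sigma>))" for m y
  proof -
    have "ennreal ((1/2) ^ m) * (G ((1/2) ^ m * y) * ennreal (1 / \<bar>(1/2) ^ m * y\<bar> powr (1 + \<sigma>)))
        = (ennreal ((1/2) ^ m) * ennreal (1 / \<bar>(1/2) ^ m * y\<bar> powr (1 + \<sigma>))) * G ((1/2) ^ m * y)"
      by (simp only: mult_ac)
    also have "\<dots> = (ennreal ((2 powr \<sigma>) ^ m) * ennreal (1 / \<bar>y\<bar> powr (1 + \<sigma>))) * G ((1/2) ^ m * y)"
      by (simp only: weight)
    finally show ?thesis
      by (simp only: mult_ac)
  qed
  have "(\<integral>\<^sup>+h. G h * ennreal (1 / \<bar>h\<bar> powr (1 + \<sigma>)) * indicator {0<..1} h \<partial>lborel)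
    = (\<integral>\<^sup>+y. (\<Sum>m. ennreal ((1/2) ^ m)
          * (G ((1/2) ^ m * y) * ennreal (1 / \<bar>(1/2) ^ m * y\<bar> powr (1 + \<sigma>))))
        * indicator {1/2<..1} y \<partial>lborel)"
    by (rule nn_integral_unit_interval_dyadic) measurable
  then show ?thesis
    by (simp only: scaled ennreal_suminf_multc)
qed

section \<open>Doubling functions on the half-line\<close>

lemma doubling_dyadic_incseq:
  fixes G :: "real \<Rightarrow> ennreal"
  assumes doubling: "\<And>h. 0 < h \<Longrightarrow> G (2 * h) \<le> ennreal (2 powr p) * G h" and "0 < y"
  shows "incseq (\<lambda>m. ennreal ((2 powr p) ^ m) * G ((1/2) ^ m * y))"
proof (rule incseq_SucI)
  fix m
  have "G ((1/2) ^ m * y) = G (2 * ((1/2) ^ Suc m * y))"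
    by simp
  also have "\<dots> \<le> ennreal (2 powr p) * G ((1/2) ^ Suc m * y)"
    using \<open>0 < y\<close> by (intro doubling) simp
  finally have "ennreal ((2 powr p) ^ m) * G ((1/2) ^ m * y)
      \<le> ennreal ((2 powr p) ^ m) * (ennreal (2 powr p) * G ((1/2) ^ Suc m * y))"
    by (rule mult_left_mono) simp
  also have "\<dots> = ennreal ((2 powr p) ^ Suc m) * G ((1/2) ^ Suc m * y)"
    by (simp add: ennreal_mult' mult_ac)
  finally show "ennreal ((2 powr p) ^ m) * G ((1/2) ^ m * y)
      \<le> ennreal ((2 powr p) ^ Suc m) * G ((1/2) ^ Suc m * y)" .
qed

lemma doubling_near_origin_mono:
  fixes G :: "real \<Rightarrow> ennreal" and p \<sigma>\<^sub>1 \<sigma>\<^sub>2 :: real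
  assumes [measurable]: "G \<in> borel_measurable borel"
    and doubling: "\<And>h. 0 < h \<Longrightarrow> G (2 * h) \<le> ennreal (2 powr p) * G h"
    and "\<sigma>\<^sub>1 \<le> \<sigma>\<^sub>2" "\<sigma>\<^sub>2 < p"
  shows "ennreal (1 - 2 powr (\<sigma>\<^sub>1 - p))
      * (\<integral>\<^sup>+h. G h * ennreal (1 / \<bar>h\<bar> powr (1 + \<sigma>\<^sub>1)) * indicator {0<..1} h \<partial>lborel)
    \<le> ennreal (1 - 2 powr (\<sigma>\<^sub>2 - p))
      * (\<integral>\<^sup>+h. G h * ennreal (1 / \<bar>h\<bar> powr (1 + \<sigma>\<^sub>2)) * indicator {0<..1} h \<partial>lborel)"
proof -
  let ?\<Phi> = "\<lambda>y m. ennreal ((2 powr p) ^ m) * G ((1/2) ^ m * y)"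
  let ?S = "\<lambda>\<sigma> y. \<Sum>m. ennreal ((2 powr (\<sigma> - p)) ^ m) * ?\<Phi> y m"
  let ?w = "\<lambda>\<sigma> y. ennreal (1 / \<bar>y\<bar> powr (1 + \<sigma>))"
  have dyadic: "(\<integral>\<^sup>+h. G h * ?w \<sigma> h * indicator {0<..1} h \<partial>lborel)
      = (\<integral>\<^sup>+y. ?S \<sigma> y * ?w \<sigma> y * indicator {1/2<..1} y \<partial>lborel)" for \<sigma>
  proof -
    have "2 powr \<sigma> = 2 powr (\<sigma> - p) * 2 powr p"
      by (simp add: powr_add[symmetric])
    then have "ennreal ((2 powr \<sigma>) ^ m) * G ((1/2) ^ m * y)
        = ennreal ((2 powr (\<sigma> - p)) ^ m) * ?\<Phi> y m" for m y
      by (simp add: power_mult_distrib ennreal_mult mult.assoc)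
    then show ?thesis
      by (simp only: nn_integral_near_origin_dyadic[of G \<sigma>] assms(1))
  qed
  have "ennreal (1 - 2 powr (\<sigma>\<^sub>1 - p)) * (?S \<sigma>\<^sub>1 y * ?w \<sigma>\<^sub>1 y * indicator {1/2<..1} y)
      \<le> ennreal (1 - 2 powr (\<sigma>\<^sub>2 - p)) * (?S \<sigma>\<^sub>2 y * ?w \<sigma>\<^sub>2 y * indicator {1/2<..1} y)" for y
  proof (cases "y \<in> {1/2<..1}")
    case True
    then have "0 < y" "y \<le> 1" by auto
    have "ennreal (1 - 2 powr (\<sigma>\<^sub>1 - p)) * ?S \<sigma>\<^sub>1 y \<le> ennreal (1 - 2 powr (\<sigma>\<^sub>2 - p)) * ?S \<sigma>\<^sub>2 y"
      using assms(3,4) powr_less_one[of 2 "\<sigma>\<^sub>2 - p"]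
        doubling_dyadic_incseq[of G p y, OF doubling \<open>0 < y\<close>]
      by (intro geometric_weighted_suminf_mono) auto
    moreover have "?w \<sigma>\<^sub>1 y \<le> ?w \<sigma>\<^sub>2 y"
      using \<open>0 < y\<close> \<open>y \<le> 1\<close> assms(3)
      by (intro ennreal_leI divide_left_mono powr_mono') auto
    ultimately show ?thesis
      using True by (simp add: mult.assoc[symmetric] mult_mono)
  qed simp
  then show ?thesis
    by (simp add: dyadic nn_integral_cmult[symmetric] nn_integral_mono)
qed

lemma nn_integral_powr_tail:
  fixes \<sigma> :: real
  assumes "0 < \<sigma>"
  shows "(\<integral>\<^sup>+h. ennreal (1 / \<bar>h\<bar> powr (1 + \<sigma>)) * indicator {1..} h \<partial>lborel) = ennreal (1 / \<sigma>)"
proof -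
  let ?F = "\<lambda>x::real. - (x powr (- \<sigma>)) / \<sigma>"
  have "(\<integral>\<^sup>+h. ennreal (1 / \<bar>h\<bar> powr (1 + \<sigma>)) * indicator {1..} h \<partial>lborel) = ennreal (0 - ?F 1)"
  proof (rule nn_integral_FTC_atLeast)
    fix x :: real
    assume "1 \<le> x"
    have "(?F has_real_derivative (- (- \<sigma> * x powr (- \<sigma> - 1)) / \<sigma>)) (at x)"
      using \<open>1 \<le> x\<close> \<open>0 < \<sigma>\<close> by (intro derivative_eq_intros) auto
    moreover have "- (- \<sigma> * x powr (- \<sigma> - 1)) / \<sigma> = 1 / \<bar>x\<bar> powr (1 + \<sigma>)"
      using \<open>1 \<le> x\<close> \<open>0 < \<sigma>\<close> by (simp add: powr_minus_divide powr_diff powr_add)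
    ultimately show "(?F has_real_derivative 1 / \<bar>x\<bar> powr (1 + \<sigma>)) (at x)"
      by simp
  next
    have "((\<lambda>x::real. x powr (- \<sigma>)) \<longlongrightarrow> 0) at_top"
      using \<open>0 < \<sigma>\<close> by (intro tendsto_neg_powr filterlim_ident) auto
    then show "(?F \<longlongrightarrow> 0) at_top"
      using tendsto_minus[OF tendsto_divide_zero[where c = \<sigma>]] by fastforce
  qed auto
  then show ?thesis
    by simp
qed

lemma bounded_tail_le:
  fixes G :: "real \<Rightarrow> ennreal" and B :: ennreal and \<sigma> :: real
  assumes [measurable]: "G \<in> borel_measurable borel"
    and bound: "\<And>h. 1 < h \<Longrightarrow> G h \<le> B" and "0 < \<sigma>"
  shows "(\<integral>\<^sup>+h. G h * ennreal (1 / \<bar>h\<bar> powr (1 + \<sigma>)) * indicator {1<..} h \<partial>lborel)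
    \<le> B * ennreal (1 / \<sigma>)"
proof -
  have "(\<integral>\<^sup>+h. G h * ennreal (1 / \<bar>h\<bar> powr (1 + \<sigma>)) * indicator {1<..} h \<partial>lborel)
      \<le> (\<integral>\<^sup>+h. B * (ennreal (1 / \<bar>h\<bar> powr (1 + \<sigma>)) * indicator {1..} h) \<partial>lborel)"
    using bound by (intro nn_integral_mono) (auto simp: indicator_def intro: mult_right_mono)
  also have "\<dots> = B * ennreal (1 / \<sigma>)"
    using \<open>0 < \<sigma>\<close> by (simp add: nn_integral_cmult nn_integral_powr_tail)
  finally show ?thesis .
qed

lemma fractional_constant_le:
  fixes p s\<^sub>1 s\<^sub>2 :: real
  assumes "0 < p" "0 < s\<^sub>1" "s\<^sub>1 \<le> s\<^sub>2" "s\<^sub>2 < 1"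
  shows "s\<^sub>1 * (1 - s\<^sub>1) * (1 - 2 powr (s\<^sub>2 * p - p))
    \<le> 2 powr ((1 - s\<^sub>1) * p) * (s\<^sub>2 * (1 - s\<^sub>2)) * (1 - 2 powr (s\<^sub>1 * p - p))"
proof -
  define a\<^sub>1 a\<^sub>2 where "a\<^sub>1 = (1 - s\<^sub>1) * p * ln 2" and "a\<^sub>2 = (1 - s\<^sub>2) * p * ln 2"
  have q: "2 powr (s\<^sub>1 * p - p) = exp (- a\<^sub>1)" "2 powr (s\<^sub>2 * p - p) = exp (- a\<^sub>2)"
    and c: "2 powr ((1 - s\<^sub>1) * p) = exp a\<^sub>1"
    by (simp_all add: a\<^sub>1_def a\<^sub>2_def powr_def algebra_simps)
  have "1 - exp (- a\<^sub>2) \<le> a\<^sub>2"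
    using exp_ge_add_one_self[of "- a\<^sub>2"] by simp
  moreover have "a\<^sub>1 \<le> exp a\<^sub>1 * (1 - exp (- a\<^sub>1))"
    using exp_ge_add_one_self[of a\<^sub>1] by (simp add: algebra_simps exp_minus_inverse)
  ultimately have key: "(1 - s\<^sub>1) * (1 - exp (- a\<^sub>2)) \<le> (1 - s\<^sub>2) * (exp a\<^sub>1 * (1 - exp (- a\<^sub>1)))"
    using assms mult_left_mono[of "1 - exp (- a\<^sub>2)" a\<^sub>2 "1 - s\<^sub>1"]
      mult_left_mono[of a\<^sub>1 "exp a\<^sub>1 * (1 - exp (- a\<^sub>1))" "1 - s\<^sub>2"]
    by (simp add: a\<^sub>1_def a\<^sub>2_def algebra_simps)
  have "s\<^sub>1 * ((1 - s\<^sub>1) * (1 - exp (- a\<^sub>2))) \<le> s\<^sub>1 * ((1 - s\<^sub>2) * (exp a\<^sub>1 * (1 - exp (- a\<^sub>1))))"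
    using assms by (intro mult_left_mono[OF key]) auto
  also have "\<dots> \<le> s\<^sub>2 * ((1 - s\<^sub>2) * (exp a\<^sub>1 * (1 - exp (- a\<^sub>1))))"
    using assms by (intro mult_right_mono) (auto simp: a\<^sub>1_def)
  finally show ?thesis
    unfolding q c by (simp add: mult_ac)
qed

lemma doubling_near_origin_le:
  fixes G :: "real \<Rightarrow> ennreal" and p s\<^sub>1 s\<^sub>2 :: real
  assumes [measurable]: "G \<in> borel_measurable borel"
    and doubling: "\<And>h. 0 < h \<Longrightarrow> G (2 * h) \<le> ennreal (2 powr p) * G h"
    and "0 < p" "0 < s\<^sub>1" "s\<^sub>1 \<le> s\<^sub>2" "s\<^sub>2 < 1"
  shows "ennreal (s\<^sub>1 * (1 - s\<^sub>1))
      * (\<integral>\<^sup>+h. G h * ennreal (1 / \<bar>h\<bar> powr (1 + s\<^sub>1 * p)) * indicator {0<..1} h \<partial>lborel)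
    \<le> ennreal (2 powr ((1 - s\<^sub>1) * p) * (s\<^sub>2 * (1 - s\<^sub>2)))
      * (\<integral>\<^sup>+h. G h * ennreal (1 / \<bar>h\<bar> powr (1 + s\<^sub>2 * p)) * indicator {0<..1} h \<partial>lborel)"
    (is "ennreal ?c\<^sub>1 * ?N\<^sub>1 \<le> ennreal ?c\<^sub>2 * ?N\<^sub>2")
proof -
  define q\<^sub>1 q\<^sub>2 where "q\<^sub>1 = 2 powr (s\<^sub>1 * p - p)" and "q\<^sub>2 = 2 powr (s\<^sub>2 * p - p)"
  have "q\<^sub>1 < 1" "q\<^sub>2 < 1"
    unfolding q\<^sub>1_def q\<^sub>2_def using assms
    by (auto intro!: powr_less_one simp: mult_less_cancel_right2)
  have mono: "ennreal (1 - q\<^sub>1) * ?N\<^sub>1 \<le> ennreal (1 - q\<^sub>2) * ?N\<^sub>2"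
    unfolding q\<^sub>1_def q\<^sub>2_def using assms
    by (intro doubling_near_origin_mono[where G = G and p = p, OF _ doubling])
      (auto simp: mult_right_mono mult_less_cancel_right2)
  have "ennreal (1 - q\<^sub>1) * (ennreal ?c\<^sub>1 * ?N\<^sub>1) = ennreal ?c\<^sub>1 * (ennreal (1 - q\<^sub>1) * ?N\<^sub>1)"
    by (simp only: mult_ac)
  also have "\<dots> \<le> ennreal ?c\<^sub>1 * (ennreal (1 - q\<^sub>2) * ?N\<^sub>2)"
    by (rule mult_left_mono[OF mono]) simp
  also have "\<dots> = ennreal (?c\<^sub>1 * (1 - q\<^sub>2)) * ?N\<^sub>2"
    using assms \<open>q\<^sub>2 < 1\<close> by (simp add: ennreal_mult mult.assoc)
  also have "\<dots> \<le> ennreal (?c\<^sub>2 * (1 - q\<^sub>1)) * ?N\<^sub>2"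
    unfolding q\<^sub>1_def q\<^sub>2_def using fractional_constant_le[of p s\<^sub>1 s\<^sub>2] assms
    by (intro mult_right_mono ennreal_leI) (auto simp: mult_ac)
  also have "\<dots> = ennreal (1 - q\<^sub>1) * (ennreal ?c\<^sub>2 * ?N\<^sub>2)"
    using assms \<open>q\<^sub>1 < 1\<close> by (simp add: ennreal_mult mult_ac)
  finally show ?thesis
    using \<open>q\<^sub>1 < 1\<close> by (simp add: ennreal_mult_le_mult_iff)
qed

lemma doubling_weighted_integral_le:
  fixes G :: "real \<Rightarrow> ennreal" and B :: ennreal and p s\<^sub>1 s\<^sub>2 :: real
  assumes [measurable]: "G \<in> borel_measurable borel"
    and doubling: "\<And>h. 0 < h \<Longrightarrow> G (2 * h) \<le> ennreal (2 powr p) * G h"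
    and bound: "\<And>h. 1 < h \<Longrightarrow> G h \<le> B"
    and "0 < p" "0 < s\<^sub>1" "s\<^sub>1 \<le> s\<^sub>2" "s\<^sub>2 < 1"
  shows "ennreal (s\<^sub>1 * (1 - s\<^sub>1))
      * (\<integral>\<^sup>+h. G h * ennreal (1 / \<bar>h\<bar> powr (1 + s\<^sub>1 * p)) * indicator {0<..} h \<partial>lborel)
    \<le> ennreal (2 powr ((1 - s\<^sub>1) * p)) * (ennreal (s\<^sub>2 * (1 - s\<^sub>2))
        * (\<integral>\<^sup>+h. G h * ennreal (1 / \<bar>h\<bar> powr (1 + s\<^sub>2 * p)) * indicator {0<..} h \<partial>lborel))
      + ennreal ((1 - s\<^sub>1) / p) * B"
proof -
  let ?I = "\<lambda>s A. \<integral>\<^sup>+h. G h * ennreal (1 / \<bar>h\<bar> powr (1 + s * p)) * indicator A h \<partial>lborel"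
  have split: "?I s {0<..} = ?I s {0<..1} + ?I s {1<..}" for s
  proof -
    have "?I s {0<..} = (\<integral>\<^sup>+h. G h * ennreal (1 / \<bar>h\<bar> powr (1 + s * p)) * indicator {0<..1} h
        + G h * ennreal (1 / \<bar>h\<bar> powr (1 + s * p)) * indicator {1<..} h \<partial>lborel)"
      by (intro nn_integral_cong) (auto simp: indicator_def)
    then show ?thesis
      by (simp add: nn_integral_add)
  qed
  have "ennreal (s\<^sub>1 * (1 - s\<^sub>1)) * ?I s\<^sub>1 {0<..}
      = ennreal (s\<^sub>1 * (1 - s\<^sub>1)) * ?I s\<^sub>1 {0<..1} + ennreal (s\<^sub>1 * (1 - s\<^sub>1)) * ?I s\<^sub>1 {1<..}"
    by (simp add: split distrib_left)
  also have "\<dots> \<le> ennreal (2 powr ((1 - s\<^sub>1) * p) * (s\<^sub>2 * (1 - s\<^sub>2))) * ?I s\<^sub>2 {0<..1}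
      + ennreal (s\<^sub>1 * (1 - s\<^sub>1)) * (B * ennreal (1 / (s\<^sub>1 * p)))"
    using assms
    by (intro add_mono mult_left_mono doubling_near_origin_le[where G = G and p = p, OF _ doubling]
        bounded_tail_le[where G = G, OF _ bound]) auto
  also have "\<dots> \<le> ennreal (2 powr ((1 - s\<^sub>1) * p) * (s\<^sub>2 * (1 - s\<^sub>2))) * ?I s\<^sub>2 {0<..}
      + ennreal ((1 - s\<^sub>1) / p) * B"
  proof (intro add_mono mult_left_mono)
    show "?I s\<^sub>2 {0<..1} \<le> ?I s\<^sub>2 {0<..}"
      by (simp add: split)
    have "s\<^sub>1 * (1 - s\<^sub>1) * (1 / (s\<^sub>1 * p)) = (1 - s\<^sub>1) / p"
      using assms by simp
    then show "ennreal (s\<^sub>1 * (1 - s\<^sub>1)) * (B * ennreal (1 / (s\<^sub>1 * p)))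
        \<le> ennreal ((1 - s\<^sub>1) / p) * B"
      using assms by (simp add: ennreal_mult[symmetric] mult_ac)
  qed simp
  finally show ?thesis
    using assms by (simp add: ennreal_mult mult.assoc)
qed

section \<open>Differences of translates\<close>

lemma add_powr_le:
  fixes x y p :: real
  assumes "1 \<le> p" "0 \<le> x" "0 \<le> y"
  shows "(x + y) powr p \<le> 2 powr (p - 1) * (x powr p + y powr p)"
proof (cases "x = 0 \<or> y = 0")
  case True
  have "1 \<le> (2::real) powr (p - 1)"
    using assms(1) by (intro ge_one_powr_ge_zero) auto
  then have "z powr p \<le> 2 powr (p - 1) * z powr p" for z :: real
    by (simp add: mult_le_cancel_right1)
  with True show ?thesis by auto
next
  case False
  with assms have "0 < x" "0 < y" by auto
  then have "((x + y) / 2) powr p \<le> (x powr p + y powr p) / 2"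
    using convex_onD[OF powr_convex[OF assms(1)], of "1/2" x y] by (simp add: field_simps)
  then have "2 powr p * ((x + y) / 2) powr p \<le> 2 powr p * ((x powr p + y powr p) / 2)"
    by (rule mult_left_mono) simp
  with assms show ?thesis by (simp add: powr_divide powr_diff)
qed

lemma abs_add_powr_le:
  fixes a b p :: real
  assumes "1 \<le> p"
  shows "\<bar>a + b\<bar> powr p \<le> 2 powr (p - 1) * (\<bar>a\<bar> powr p + \<bar>b\<bar> powr p)"
proof -
  have "\<bar>a + b\<bar> powr p \<le> (\<bar>a\<bar> + \<bar>b\<bar>) powr p"
    using assms by (intro powr_mono2) auto
  also have "\<dots> \<le> 2 powr (p - 1) * (\<bar>a\<bar> powr p + \<bar>b\<bar> powr p)"
    using assms by (intro add_powr_le) auto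
  finally show ?thesis .
qed

lemma nn_integral_lborel_translate:
  fixes g :: "'a::euclidean_space \<Rightarrow> ennreal"
  assumes [measurable]: "g \<in> borel_measurable borel"
  shows "(\<integral>\<^sup>+x. g (x + c) \<partial>lborel) = (\<integral>\<^sup>+x. g x \<partial>lborel)"
proof -
  have "(\<integral>\<^sup>+x. g x \<partial>lborel) = (\<integral>\<^sup>+x. g x \<partial>distr lborel borel ((+) c))"
    by (simp add: lborel_distr_plus)
  also have "\<dots> = (\<integral>\<^sup>+x. g (c + x) \<partial>lborel)"
    by (rule nn_integral_distr) auto
  finally show ?thesis
    by (simp add: add.commute)
qed

lemma nn_integral_translate_add_powr_le:
  fixes f g :: "'a::euclidean_space \<Rightarrow> real" and c :: 'a
  assumes "1 \<le> p" and [measurable]: "f \<in> borel_measurable borel" "g \<in> borel_measurable borel"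
  shows "(\<integral>\<^sup>+x. ennreal (\<bar>f (x + c) + g x\<bar> powr p) \<partial>lborel)
    \<le> ennreal (2 powr (p - 1)) *
      ((\<integral>\<^sup>+x. ennreal (\<bar>f x\<bar> powr p) \<partial>lborel) + (\<integral>\<^sup>+x. ennreal (\<bar>g x\<bar> powr p) \<partial>lborel))"
proof -
  let ?F = "\<lambda>x. ennreal (\<bar>f x\<bar> powr p)" and ?G = "\<lambda>x. ennreal (\<bar>g x\<bar> powr p)"
  have [measurable]: "(\<lambda>x. f (x + c)) \<in> borel_measurable borel"
    by (intro measurable_compose[OF _ assms(2)] borel_measurable_continuous_onI continuous_intros)
  have "(\<integral>\<^sup>+x. ennreal (\<bar>f (x + c) + g x\<bar> powr p) \<partial>lborel)
      \<le> (\<integral>\<^sup>+x. ennreal (2 powr (p - 1)) * (?F (x + c) + ?G x) \<partial>lborel)"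
    using abs_add_powr_le[OF \<open>1 \<le> p\<close>]
    by (intro nn_integral_mono)
      (simp add: ennreal_mult[symmetric] del: ennreal_plus add: ennreal_plus[symmetric])
  also have "\<dots> = ennreal (2 powr (p - 1)) * ((\<integral>\<^sup>+x. ?F (x + c) \<partial>lborel) + (\<integral>\<^sup>+x. ?G x \<partial>lborel))"
    by (simp add: nn_integral_cmult nn_integral_add)
  also have "(\<integral>\<^sup>+x. ?F (x + c) \<partial>lborel) = (\<integral>\<^sup>+x. ?F x \<partial>lborel)"
    by (rule nn_integral_lborel_translate) measurable
  finally show ?thesis .
qed

definition shift_difference :: "('a::euclidean_space \<Rightarrow> real) \<Rightarrow> real \<Rightarrow> 'a \<Rightarrow> ennreal" where
  "shift_difference u p v = (\<integral>\<^sup>+x. ennreal (\<bar>u (x + v) - u x\<bar> powr p) \<partial>lborel)"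

lemma borel_measurable_shift_difference_integrand:
  fixes u :: "'a::euclidean_space \<Rightarrow> real" and g :: "'b::euclidean_space \<Rightarrow> 'a"
  assumes "u \<in> borel_measurable borel" and "continuous_on UNIV g"
  shows "(\<lambda>(h, x). ennreal (\<bar>u (x + g h) - u x\<bar> powr p)) \<in> borel_measurable (lborel \<Otimes>\<^sub>M lborel)"
proof -
  have "continuous_on UNIV (\<lambda>z::'b \<times> 'a. snd z + g (fst z))"
    by (intro continuous_intros continuous_on_compose2[OF assms(2)]) auto
  then have [measurable]: "(\<lambda>z::'b \<times> 'a. u (snd z + g (fst z))) \<in> borel_measurable borel"
    by (rule measurable_compose[OF borel_measurable_continuous_onI assms(1)])
  have [measurable]: "(\<lambda>z::'b \<times> 'a. u (snd z)) \<in> borel_measurable borel"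
    by (intro measurable_compose[OF borel_measurable_continuous_onI assms(1)] continuous_intros)
  show ?thesis
    by (simp add: lborel_prod case_prod_unfold)
qed

lemma borel_measurable_shift_difference:
  fixes u :: "'a::euclidean_space \<Rightarrow> real"
  assumes "u \<in> borel_measurable borel"
  shows "shift_difference u p \<in> borel_measurable borel"
  using lborel.borel_measurable_nn_integral[OF
      borel_measurable_shift_difference_integrand[OF assms continuous_on_id, of p]]
  by (simp add: shift_difference_def[abs_def])

lemma shift_difference_double:
  fixes u :: "'a::euclidean_space \<Rightarrow> real"
  assumes [measurable]: "u \<in> borel_measurable borel" and "1 \<le> p"
  shows "shift_difference u p (2 *\<^sub>R v) \<le> ennreal (2 powr p) * shift_difference u p v"
proof -
  let ?d = "\<lambda>x. u (x + v) - u x"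
  have [measurable]: "?d \<in> borel_measurable borel"
    by (intro borel_measurable_diff measurable_compose[OF _ assms(1)]
        borel_measurable_continuous_onI continuous_intros)
  have "shift_difference u p (2 *\<^sub>R v) = (\<integral>\<^sup>+x. ennreal (\<bar>?d (x + v) + ?d x\<bar> powr p) \<partial>lborel)"
    by (simp add: shift_difference_def scaleR_2 add.assoc)
  also have "\<dots> \<le> ennreal (2 powr (p - 1)) * (shift_difference u p v + shift_difference u p v)"
    unfolding shift_difference_def using \<open>1 \<le> p\<close>
    by (rule nn_integral_translate_add_powr_le[where f = ?d and g = ?d]) measurable
  also have "\<dots> = ennreal (2 powr (p - 1) * 2) * shift_difference u p v"
    by (simp add: ennreal_mult' mult_2[symmetric] mult.assoc)
  finally show ?thesis
    by (simp add: powr_diff)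
qed

lemma shift_difference_le:
  fixes u :: "'a::euclidean_space \<Rightarrow> real"
  assumes [measurable]: "u \<in> borel_measurable borel" and "1 \<le> p"
  shows "shift_difference u p v \<le> ennreal (2 powr p) * (\<integral>\<^sup>+x. ennreal (\<bar>u x\<bar> powr p) \<partial>lborel)"
proof -
  have "shift_difference u p v = (\<integral>\<^sup>+x. ennreal (\<bar>u (x + v) + - u x\<bar> powr p) \<partial>lborel)"
    by (simp add: shift_difference_def)
  also have "\<dots> \<le> ennreal (2 powr (p - 1)) *
      ((\<integral>\<^sup>+x. ennreal (\<bar>u x\<bar> powr p) \<partial>lborel) + (\<integral>\<^sup>+x. ennreal (\<bar>- u x\<bar> powr p) \<partial>lborel))"
    using \<open>1 \<le> p\<close>
    by (rule nn_integral_translate_add_powr_le[where f = u and g = "\<lambda>x. - u x"]) measurable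
  also have "\<dots> = ennreal (2 powr (p - 1) * 2) * (\<integral>\<^sup>+x. ennreal (\<bar>u x\<bar> powr p) \<partial>lborel)"
    by (simp add: ennreal_mult' mult_2[symmetric] mult.assoc)
  finally show ?thesis
    by (simp add: powr_diff)
qed

lemma J1_eq_shift_difference:
  fixes u :: "real ^ 'n::{finite,wellorder} \<Rightarrow> real"
  assumes [measurable]: "u \<in> borel_measurable borel"
  shows "J1 s p u = ennreal (s * (1 - s))
    * (\<integral>\<^sup>+h. shift_difference u p (h *\<^sub>R e1) * ennreal (1 / \<bar>h\<bar> powr (1 + s * p)) \<partial>lborel)"
proof -
  let ?f = "\<lambda>h x. ennreal (\<bar>u (x + h *\<^sub>R e1) - u x\<bar> powr p) * ennreal (1 / \<bar>h\<bar> powr (1 + s * p))"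
  have [measurable]: "(\<lambda>(h, x). ennreal (\<bar>u (x + h *\<^sub>R e1) - u x\<bar> powr p))
      \<in> borel_measurable (lborel \<Otimes>\<^sub>M lborel)"
    by (intro borel_measurable_shift_difference_integrand assms continuous_intros)
  have measurable_f: "case_prod ?f \<in> borel_measurable (lborel \<Otimes>\<^sub>M lborel)"
    by measurable
  have integrand: "ennreal (\<bar>u (x + h *\<^sub>R e1) - u x\<bar> powr p / \<bar>h\<bar> powr (1 + s * p)) = ?f h x"
    for h x
    by (simp add: ennreal_mult'[symmetric])
  have "J1 s p u = ennreal (s * (1 - s)) * (\<integral>\<^sup>+x. (\<integral>\<^sup>+h. ?f h x \<partial>lborel) \<partial>lborel)"
    unfolding J1_def by (simp only: integrand)
  also have "\<dots> = ennreal (s * (1 - s)) * (\<integral>\<^sup>+h. (\<integral>\<^sup>+x. ?f h x \<partial>lborel) \<partial>lborel)"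
    by (simp only: lborel_pair.Fubini'[OF measurable_f])
  also have "\<dots> = ennreal (s * (1 - s))
      * (\<integral>\<^sup>+h. shift_difference u p (h *\<^sub>R e1) * ennreal (1 / \<bar>h\<bar> powr (1 + s * p)) \<partial>lborel)"
    unfolding shift_difference_def
    by (intro arg_cong2[where f = "(*)"] refl nn_integral_cong nn_integral_multc) measurable
  finally show ?thesis .
qed

lemma nn_integral_lborel_reflect:
  fixes f :: "real \<Rightarrow> ennreal"
  assumes [measurable]: "f \<in> borel_measurable borel"
  shows "(\<integral>\<^sup>+h. f h \<partial>lborel) = (\<integral>\<^sup>+h. (f h + f (- h)) * indicator {0<..} h \<partial>lborel)"
proof -
  have "AE h in lborel. f h = f h * indicator {0<..} h + f h * indicator {..<0} h"
    using AE_lborel_singleton[of 0] by eventually_elim (auto simp: indicator_def)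
  then have "(\<integral>\<^sup>+h. f h \<partial>lborel)
      = (\<integral>\<^sup>+h. f h * indicator {0<..} h + f h * indicator {..<0} h \<partial>lborel)"
    by (rule nn_integral_cong_AE)
  also have "\<dots> = (\<integral>\<^sup>+h. f h * indicator {0<..} h \<partial>lborel)
      + (\<integral>\<^sup>+h. f h * indicator {..<0} h \<partial>lborel)"
    by (rule nn_integral_add) measurable
  also have "(\<integral>\<^sup>+h. f h * indicator {..<0} h \<partial>lborel)
      = (\<integral>\<^sup>+h. f (- h) * indicator {0<..} h \<partial>lborel)"
    by (subst nn_integral_real_affine[where c = "-1" and t = 0]) (auto simp: indicator_def)
  finally show ?thesis
    by (simp add: nn_integral_add distrib_right)
qed

lemma J1_eq_reflected_shift_difference:
  fixes u :: "real ^ 'n::{finite,wellorder} \<Rightarrow> real"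
  assumes "u \<in> borel_measurable borel"
  shows "J1 s p u = ennreal (s * (1 - s))
    * (\<integral>\<^sup>+h. (shift_difference u p (h *\<^sub>R e1) + shift_difference u p ((- h) *\<^sub>R e1))
        * ennreal (1 / \<bar>h\<bar> powr (1 + s * p)) * indicator {0<..} h \<partial>lborel)"
proof -
  have [measurable]: "shift_difference u p \<in> borel_measurable borel"
    by (rule borel_measurable_shift_difference[OF assms])
  show ?thesis
    unfolding J1_eq_shift_difference[OF assms]
    by (subst nn_integral_lborel_reflect) (simp_all add: distrib_right)
qed

theorem lemma2p6:
  fixes u :: "real ^ 'n::{finite,wellorder} \<Rightarrow> real" and p s1 s2 :: real
  assumes "1 < p" and "0 < s1" and "s1 < s2" and "s2 < 1"
    and "in_Lp p u"
  shows "J1 s1 p u \<le> ennreal (2 powr ((1 - s1) * p)) * J1 s2 p u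
           + ennreal ((1 - s1) * 2 powr (p + 1) / p) * (\<integral>\<^sup>+ x. ennreal (\<bar>u x\<bar> powr p) \<partial>lborel)"
proof -
  have u: "u \<in> borel_measurable borel" and "1 \<le> p"
    using assms by (auto simp: in_Lp_def)
  have [measurable]: "shift_difference u p \<in> borel_measurable borel"
    by (rule borel_measurable_shift_difference[OF u])
  define N where "N = (\<integral>\<^sup>+ x. ennreal (\<bar>u x\<bar> powr p) \<partial>lborel)"
  define G where "G h = shift_difference u p (h *\<^sub>R e1) + shift_difference u p ((- h) *\<^sub>R e1)" for h
  have "G \<in> borel_measurable borel"
    unfolding G_def by measurable
  moreover have "G (2 * h) \<le> ennreal (2 powr p) * G h" for h
    using shift_difference_double[OF u \<open>1 \<le> p\<close>, of "h *\<^sub>R e1"]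
      shift_difference_double[OF u \<open>1 \<le> p\<close>, of "(- h) *\<^sub>R e1"]
    by (simp add: G_def distrib_left add_mono)
  moreover have "G h \<le> ennreal (2 powr (p + 1)) * N" for h
    using add_mono[OF shift_difference_le[OF u \<open>1 \<le> p\<close>, of "h *\<^sub>R e1"]
        shift_difference_le[OF u \<open>1 \<le> p\<close>, of "(- h) *\<^sub>R e1"]]
    by (simp add: G_def N_def powr_add ennreal_mult' mult_2_right[symmetric] mult_ac)
  ultimately have "J1 s1 p u \<le> ennreal (2 powr ((1 - s1) * p)) * J1 s2 p u
      + ennreal ((1 - s1) / p) * (ennreal (2 powr (p + 1)) * N)"
    unfolding J1_eq_reflected_shift_difference[OF u] G_def[symmetric] using assms
    by (intro doubling_weighted_integral_le) auto
  also have "ennreal ((1 - s1) / p) * (ennreal (2 powr (p + 1)) * N)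
      = ennreal ((1 - s1) * 2 powr (p + 1) / p) * N"
    by (simp add: ennreal_mult''[symmetric] mult.assoc[symmetric])
  finally show ?thesis
    unfolding N_def .
qed

end
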